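(* For every $\psi \in L^1(\mathbb{R}_+^{\times})$, $f \in L^{\infty}(\mathbb{R}_+^{\times})$ and $\omega \in \Omega^*$, \[(U_{\psi}f)^{\times}_{\omega}(x) = (f^{\times}_{\omega} * \tilde{\psi})(x) \quad\text{for every } x \in \mathbb{R}^{\times},\] where $\tilde{\psi}\in L^1(\mathbb{R}^\times)$ equals $\psi$ on $[1,\infty)$ and $0$ on $(0,1)$.
   Context: $\mathbb{R}^\times = (0,\infty)$ with measure $dt/t$, $\mathbb{R}_+^\times = [1,\infty)$; functions are complex-valued. $(U_\psi f)(x) = \int_1^x f(t)\psi(x/t)\,\frac{dt}{t}$. Convolution on $\mathbb{R}^\times$: $(g*h)(x) = \int_0^\infty g(x/t)h(t)\,\frac{dt}{t}$. Let $\beta\mathbb{N}$ be the Stone–Čech compactification of $\mathbb{N}$, $\mathbb{N}^* = \beta\mathbb{N}\setminus\mathbb{N}$, $\tau$ the continuous extension of $n\mapsto n+1$ to $\beta\mathbb{N}$. $\Omega$ is the quotient of $\beta\mathbb{N}\times[0,1]$ identifying $(\eta,1)$ with $(\tau\eta,0)$; $\Omega^*$ is the set of classes $(\eta,u)$ with $\eta\in\mathbb{N}^*$; $\tau^s(\eta,u) = (\tau^{[u+s]}\eta, u+s-[u+s])$ for $s\in\mathbb{R}$. Each $\omega=(\eta,u)$ is identified with the ultrafilter on $[0,\infty)$ generated by $\{u+A: A\in\eta\}$. For $g\in L^\infty(\mathbb{R}_+^\times)$, $g^\times_\omega := \omega\text{-}\lim_s g(e^s\,\cdot)$, limit in the weak*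 topology of $L^\infty(\mathbb{R}_+^\times)$ (with respect to $dt/t$), extended to an element of $L^\infty(\mathbb{R}^\times)$ by $g^\times_\omega(x) = g^\times_{\tau^{-N}\omega}(e^N x)$ for $x\in[e^{-N},1]$, $N>0$. *)

theory Defs
  imports "HOL-Analysis.Analysis"
begin

text \<open>Measure dt/t on the multiplicative group (0,\<infinity>) (functions on the reals;
  values outside (0,\<infinity>) are irrelevant).\<close>
definition haar :: "real measure" where
  "haar = density lborel (\<lambda>t. ennreal (indicator {0<..} t / t))"

definition haar1 :: "real measure" where
  "haar1 = density lborel (\<lambda>t. ennreal (indicator {1..} t / t))"

definition Linf1 :: "(real \<Rightarrow> complex) \<Rightarrow> bool" where
  "Linf1 g \<longleftrightarrow> g \<in> borel_measurable borel \<and> (\<exists>C. AE t in haar1. norm (g t) \<le> C)"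

definition U_op :: "(real \<Rightarrow> complex) \<Rightarrow> (real \<Rightarrow> complex) \<Rightarrow> real \<Rightarrow> complex" where
  "U_op \<psi> f x = (LINT t|haar1. indicator {..x} t * f t * \<psi> (x / t))"

definition psi_tilde :: "(real \<Rightarrow> complex) \<Rightarrow> real \<Rightarrow> complex" where
  "psi_tilde \<psi> t = (if 1 \<le> t then \<psi> t else 0)"

definition mconv :: "(real \<Rightarrow> complex) \<Rightarrow> (real \<Rightarrow> complex) \<Rightarrow> real \<Rightarrow> complex" where
  "mconv g h x = (LINT t|haar. g (x / t) * h t)"

text \<open>Points of \<beta>\<nat> are ultrafilters on nat; points of \<nat>* are the free ones.\<close>
definition is_ultrafilter :: "'a filter \<Rightarrow> bool" where
  "is_ultrafilter F \<longleftrightarrow> F \<noteq> bot \<and> (\<forall>P. eventually P F \<or> eventually (\<lambda>x. \<not> P x) F)"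

definition free_uf :: "nat filter \<Rightarrow> bool" where
  "free_uf \<eta> \<longleftrightarrow> is_ultrafilter \<eta> \<and> (\<forall>n. \<not> eventually (\<lambda>m. m = n) \<eta>)"

text \<open>Integer powers of \<tau> (continuous extension of n \<mapsto> n+1); tau is the image
  filter under Suc. For negative exponents this is the inverse of \<tau> on \<nat>*
  (the only place where it is used).\<close>
definition tau_pow :: "int \<Rightarrow> nat filter \<Rightarrow> nat filter" where
  "tau_pow k \<eta> = filtermap (\<lambda>n. nat (int n + k)) \<eta>"

text \<open>A point of \<Omega>* is represented by its unique representative (\<eta>,u) with
  \<eta> free and 0 \<le> u < 1. The flow \<tau>^s:\<close>
definition tau_s :: "real \<Rightarrow> nat filter \<times> real \<Rightarrow> nat filter \<times> real" where
  "tau_s s \<omega> = (tau_pow \<lfloor>snd \<omega> + s\<rfloor> (fst \<omega>), snd \<omega> + s - of_int \<lfloor>snd \<omega> + s\<rfloor>)"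

definition omega_filter :: "nat filter \<times> real \<Rightarrow> real filter" where
  "omega_filter \<omega> = filtermap (\<lambda>n. snd \<omega> + real n) (fst \<omega>)"

text \<open>h is a representative of g^\<times>_\<omega> \<in> L\<infinity>([1,\<infinity>)): the \<omega>-limit of
  s \<mapsto> g(e^s \<cdot>) in the weak* topology of L\<infinity>([1,\<infinity>), dt/t) = L1([1,\<infinity>), dt/t)*.\<close>
definition wlim_rep :: "(real \<Rightarrow> complex) \<Rightarrow> nat filter \<times> real \<Rightarrow> (real \<Rightarrow> complex) \<Rightarrow> bool" where
  "wlim_rep g \<omega> h \<longleftrightarrow> Linf1 h \<and>
     (\<forall>\<phi>::real \<Rightarrow> complex. integrable haar1 \<phi> \<longrightarrow>
        ((\<lambda>s. LINT t|haar1. g (exp s * t) * \<phi> t) \<longlongrightarrow> (LINT t|haar1. h t * \<phi> t))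
          (omega_filter \<omega>))"

text \<open>F is a representative of the extension of g^\<times>_\<omega> to an element of
  L\<infinity>(\<real>^\<times>): F = g^\<times>_\<omega> on [1,\<infinity>) and F(x) = g^\<times>_{\<tau>^{-N}\<omega>}(e^N x) on [e^{-N},1]
  (almost everywhere, as elements of L\<infinity>).\<close>
definition ext_rep :: "(real \<Rightarrow> complex) \<Rightarrow> nat filter \<times> real \<Rightarrow> (real \<Rightarrow> complex) \<Rightarrow> bool" where
  "ext_rep g \<omega> F \<longleftrightarrow> F \<in> borel_measurable borel \<and>
     (\<exists>h. wlim_rep g \<omega> h \<and> (AE x in haar. 1 \<le> x \<longrightarrow> F x = h x)) \<and>
     (\<forall>N::nat. N > 0 \<longrightarrow>
        (\<exists>G. wlim_rep g (tau_s (- real N) \<omega>) G \<and>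
             (AE x in haar. exp (- real N) \<le> x \<and> x \<le> 1 \<longrightarrow> F x = G (exp (real N) * x))))"

end

theory Submission
  imports Defs
begin

text \<open>In logarithmic coordinates x = e^y the measure dt/t becomes Lebesgue measure, U_\<psi> f becomes
  the convolution of f \<circ> exp (restricted to [0,\<infinity>)) with \<psi>~ \<circ> exp, and the extension of
  f^\<times>_\<omega> becomes the weak* limit in L\<infinity>(\<real>), along \<omega>, of the translates of f \<circ> exp cut off
  at -s: on [-N,\<infinity>) this limit is glued from the limits along \<tau>^(-N) \<omega>, and the part below -N
  is controlled by the L\<infinity> bound, which weak* limits inherit. As \<psi>~ \<circ> exp is integrable and
  vanishes on the negative axis, Fubini moves the convolution from the translates onto the test
  function, so the translates of U_\<psi> f converge weakly* to the convolution of the limit with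
  \<psi>~. Conversely, a weak* limit on the whole line yields every shifted limit that the
  definition of the extension asks for.\<close>

section \<open>The Haar measure in logarithmic coordinates\<close>

lemma emeasure_haar_Int_exp_Icc:
  assumes [measurable]: "A \<in> sets borel" and "a \<le> b"
  shows "emeasure haar (A \<inter> {exp a..exp b}) = emeasure lborel (exp -` A \<inter> {a..b})"
proof -
  have pos: "0 < x" if "exp a \<le> x" for x
    using that by (meson exp_gt_zero less_le_trans)
  have "emeasure haar (A \<inter> {exp a..exp b}) =
      (\<integral>\<^sup>+x. ennreal (indicator {0<..} x / x) * indicator (A \<inter> {exp a..exp b}) x \<partial>lborel)"
    unfolding haar_def by (rule emeasure_density) simp_all
  also have "\<dots> = (\<integral>\<^sup>+x. ennreal (indicator A x / x * indicator {exp a..exp b} x) \<partial>lborel)"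
    by (intro nn_integral_cong) (auto simp: indicator_def dest: pos)
  also have "\<dots> = (\<integral>\<^sup>+x. ennreal (indicator A (exp x) / exp x * exp x * indicator {a..b} x) \<partial>lborel)"
    by (rule nn_integral_substitution[where g=exp and g'=exp])
      (auto intro!: derivative_eq_intros continuous_intros simp: set_borel_measurable_def \<open>a \<le> b\<close>)
  also have "\<dots> = (\<integral>\<^sup>+x. indicator (exp -` A \<inter> {a..b}) x \<partial>lborel)"
    by (intro nn_integral_cong) (simp add: indicator_def)
  also have "\<dots> = emeasure lborel (exp -` A \<inter> {a..b})"
    by simp
  finally show ?thesis .
qed

lemma haar_eq_distr_exp: "haar = distr lborel borel exp"
proof (rule measure_eqI)
  show "sets haar = sets (distr lborel borel exp)" by (simp add: haar_def)
  fix A assume "A \<in> sets haar"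
  then have [measurable]: "A \<in> sets borel" by (simp add: haar_def)
  have [measurable]: "exp -` A \<in> sets borel"
    using measurable_sets_borel[of exp borel A] by simp
  let ?K = "\<lambda>n::nat. {exp (- real n)..exp (real n)}"
  have "emeasure haar A = emeasure haar (A \<inter> {0<..})"
    unfolding haar_def by (subst (1 2) emeasure_density) (auto intro!: nn_integral_cong simp: indicator_def)
  also have "A \<inter> {0<..} = (\<Union>n. A \<inter> ?K n)"
  proof (intro equalityI subsetI)
    fix x assume x: "x \<in> A \<inter> {0<..}"
    obtain n :: nat where "\<bar>ln x\<bar> \<le> real n" using real_arch_simple by blast
    then have "exp (ln x) \<in> ?K n" by (simp add: abs_le_iff)
    then have "x \<in> A \<inter> ?K n" using x by (metis IntD1 IntD2 IntI exp_ln greaterThan_iff)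
    then show "x \<in> (\<Union>n. A \<inter> ?K n)" by blast
  next
    fix x assume "x \<in> (\<Union>n. A \<inter> ?K n)"
    then show "x \<in> A \<inter> {0<..}" by (auto intro: less_le_trans[OF exp_gt_zero])
  qed
  also have "emeasure haar \<dots> = (SUP n. emeasure haar (A \<inter> ?K n))"
  proof (intro SUP_emeasure_incseq[symmetric])
    show "incseq (\<lambda>n. A \<inter> ?K n)"
    proof (intro monoI Int_mono order_refl)
      fix m n :: nat assume "m \<le> n"
      then have "exp (- real n) \<le> exp (- real m)" "exp (real m) \<le> exp (real n)" by simp_all
      then show "?K m \<subseteq> ?K n" by auto
    qed
  qed (auto simp: haar_def)
  also have "\<dots> = (SUP n. emeasure lborel (exp -` A \<inter> {- real n..real n}))"
    by (simp add: emeasure_haar_Int_exp_Icc)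
  also have "\<dots> = emeasure lborel (\<Union>n. exp -` A \<inter> {- real n..real n})"
    by (intro SUP_emeasure_incseq) (auto simp: incseq_def)
  also have "(\<Union>n. exp -` A \<inter> {- real n..real n}) = exp -` A"
  proof (intro equalityI subsetI)
    fix x assume "x \<in> exp -` A"
    moreover obtain n :: nat where "\<bar>x\<bar> \<le> real n" using real_arch_simple by blast
    ultimately have "x \<in> exp -` A \<inter> {- real n..real n}" by (simp add: abs_le_iff)
    then show "x \<in> (\<Union>n. exp -` A \<inter> {- real n..real n})" by blast
  qed blast
  finally show "emeasure haar A = emeasure (distr lborel borel exp) A"
    by (simp add: emeasure_distr)
qed

lemma integral_haar_exp:
  fixes g :: "real \<Rightarrow> 'a::{banach, second_countable_topology}"
  assumes [measurable]: "g \<in> borel_measurable borel"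
  shows "(LINT x|haar. g x) = (LINT y|lborel. g (exp y))"
  by (simp add: haar_eq_distr_exp integral_distr)

lemma integrable_haar_iff_exp:
  fixes g :: "real \<Rightarrow> 'a::{banach, second_countable_topology}"
  assumes [measurable]: "g \<in> borel_measurable borel"
  shows "integrable haar g \<longleftrightarrow> integrable lborel (\<lambda>y. g (exp y))"
  by (simp add: haar_eq_distr_exp integrable_distr_eq)

lemma AE_haar_iff_exp:
  assumes [measurable]: "{x \<in> space borel. P x} \<in> sets borel"
  shows "(AE x in haar. P x) \<longleftrightarrow> (AE y in lborel. P (exp y))"
  unfolding haar_eq_distr_exp by (rule AE_distr_iff) simp_all

lemma haar1_eq_density_haar: "haar1 = density haar (\<lambda>t. ennreal (indicator {1..} t))"
  unfolding haar1_def haar_def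
  by (subst density_density_eq)
    (auto intro!: density_cong simp: ennreal_mult'[symmetric] split: split_indicator)

lemma integral_haar1_exp:
  fixes g :: "real \<Rightarrow> complex"
  assumes [measurable]: "g \<in> borel_measurable borel"
  shows "(LINT t|haar1. g t) = (LINT y|lborel. indicator {0..} y * g (exp y))"
proof -
  have "(LINT t|haar1. g t) = (LINT t|haar. indicator {1..} t *\<^sub>R g t)"
    unfolding haar1_eq_density_haar by (rule integral_density) (auto simp: haar_def)
  also have "\<dots> = (LINT y|lborel. indicator {0..} y * g (exp y))"
    by (subst integral_haar_exp) (auto simp: indicator_def intro!: Bochner_Integration.integral_cong)
  finally show ?thesis .
qed

lemma integrable_haar1_iff_exp:
  fixes g :: "real \<Rightarrow> complex"
  assumes [measurable]: "g \<in> borel_measurable borel"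
  shows "integrable haar1 g \<longleftrightarrow> integrable lborel (\<lambda>y. indicator {0..} y * g (exp y))"
proof -
  have "integrable haar1 g \<longleftrightarrow> integrable haar (\<lambda>t. indicator {1..} t *\<^sub>R g t)"
    unfolding haar1_eq_density_haar by (rule integrable_density) (auto simp: haar_def)
  also have "\<dots> \<longleftrightarrow> integrable lborel (\<lambda>y. indicator {0..} y * g (exp y))"
    by (subst integrable_haar_iff_exp)
      (auto simp: indicator_def intro!: Bochner_Integration.integrable_cong)
  finally show ?thesis .
qed

lemma AE_haar1_iff_exp:
  assumes [measurable]: "{x \<in> space borel. P x} \<in> sets borel"
  shows "(AE x in haar1. P x) \<longleftrightarrow> (AE y in lborel. 0 \<le> y \<longrightarrow> P (exp y))"
proof -
  have "(AE x in haar1. P x) \<longleftrightarrow> (AE x in haar. 0 < ennreal (indicator {1..} x) \<longrightarrow> P x)"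
    unfolding haar1_eq_density_haar by (rule AE_density) (simp add: haar_def)
  also have "\<dots> \<longleftrightarrow> (AE y in lborel. 0 \<le> y \<longrightarrow> P (exp y))"
    by (subst AE_haar_iff_exp) (simp_all add: indicator_def)
  finally show ?thesis .
qed

lemma sigma_finite_haar1: "sigma_finite_measure haar1"
  unfolding haar1_def
  by (subst sigma_finite_measure.sigma_finite_iff_density_finite[OF sigma_finite_lborel]) simp_all

lemma AE_lborel_translate:
  assumes [measurable]: "{x \<in> space borel. P x} \<in> sets borel"
    and "AE x in lborel. P (x::real)"
  shows "AE y in lborel. P (c + y)"
proof -
  have "AE x in distr lborel borel ((+) c). P x" using assms(2) by (simp only: lborel_distr_plus)
  then show ?thesis by (subst (asm) AE_distr_iff) simp_all
qed

lemma AE_lborel_reflect: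
  assumes [measurable]: "{x \<in> space borel. P x} \<in> sets borel"
    and "AE x in lborel. P (x::real)"
  shows "AE y in lborel. P (c - y)"
proof -
  have "AE x in distr lborel borel uminus. P x" using assms(2) by (simp only: lborel_distr_uminus)
  then have "AE x in lborel. P (- x)" by (subst (asm) AE_distr_iff) simp_all
  from AE_lborel_translate[OF _ this, of "- c"] show ?thesis by simp
qed

lemma integral_lborel_translate:
  fixes g :: "real \<Rightarrow> 'a::{banach, second_countable_topology}"
  shows "(LINT y|lborel. g y) = (LINT y|lborel. g (c + y))"
  using lborel_integral_real_affine[of 1 g c] by simp

lemma integral_lborel_reflect:
  fixes g :: "real \<Rightarrow> 'a::{banach, second_countable_topology}"
  shows "(LINT y|lborel. g y) = (LINT y|lborel. g (c - y))"
  using lborel_integral_real_affine[of "-1" g c] by simp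

lemma integrable_lborel_translate_iff:
  fixes g :: "real \<Rightarrow> 'a::{banach, second_countable_topology}"
  shows "integrable lborel (\<lambda>y. g (c + y)) \<longleftrightarrow> integrable lborel g"
  using lborel_integrable_real_affine_iff[of 1 g c] by simp

lemma integrable_lborel_reflect_iff:
  fixes g :: "real \<Rightarrow> 'a::{banach, second_countable_topology}"
  shows "integrable lborel (\<lambda>y. g (c - y)) \<longleftrightarrow> integrable lborel g"
  using lborel_integrable_real_affine_iff[of "-1" g c] by simp

lemma AE_haar1_scale:
  assumes [measurable]: "{x \<in> space borel. P x} \<in> sets borel"
    and "0 \<le> s" and "AE t in haar1. P t"
  shows "AE t in haar1. P (exp s * t)"
proof -
  have "AE y in lborel. 0 \<le> y \<longrightarrow> P (exp y)"
    using assms(3) by (subst (asm) AE_haar1_iff_exp) simp_all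
  then have "AE y in lborel. 0 \<le> s + y \<longrightarrow> P (exp (s + y))"
    by (rule AE_lborel_translate[where P="\<lambda>y. 0 \<le> y \<longrightarrow> P (exp y)", rotated]) simp
  then have "AE y in lborel. 0 \<le> y \<longrightarrow> P (exp s * exp y)"
    by eventually_elim (use \<open>0 \<le> s\<close> in \<open>simp add: exp_add\<close>)
  then show ?thesis by (subst AE_haar1_iff_exp) simp_all
qed

section \<open>Weak* limits of bounded functions\<close>

lemma integrable_bounded_mult:
  fixes b m :: "'a \<Rightarrow> complex"
  assumes [measurable]: "b \<in> borel_measurable M"
    and "AE x in M. norm (b x) \<le> C" and "integrable M m"
  shows "integrable M (\<lambda>x. b x * m x)"
proof (rule Bochner_Integration.integrable_bound)
  show "integrable M (\<lambda>x. C * norm (m x))" using assms(3) by simp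
  show "(\<lambda>x. b x * m x) \<in> borel_measurable M"
    using borel_measurable_integrable[OF assms(3)] by simp
  show "AE x in M. norm (b x * m x) \<le> norm (C * norm (m x))"
    using assms(2) by eventually_elim (simp add: norm_mult mult_right_mono order_trans[OF _ abs_ge_self])
qed

lemma integral_norm_bounded_mult_le:
  fixes b m :: "'a \<Rightarrow> complex"
  assumes [measurable]: "b \<in> borel_measurable M"
    and "AE x in M. norm (b x) \<le> C" and "integrable M m"
  shows "(\<integral>x. norm (b x * m x) \<partial>M) \<le> C * (\<integral>x. norm (m x) \<partial>M)"
proof -
  have "(\<integral>x. norm (b x * m x) \<partial>M) \<le> (\<integral>x. C * norm (m x) \<partial>M)"
  proof (rule integral_mono_AE)
    show "integrable M (\<lambda>x. norm (b x * m x))"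
      using integrable_bounded_mult[OF assms] by (rule integrable_norm)
    show "AE x in M. norm (b x * m x) \<le> C * norm (m x)"
      using assms(2) by eventually_elim (simp add: norm_mult mult_right_mono)
  qed (use assms(3) in simp)
  then show ?thesis by simp
qed

lemma norm_integral_bounded_mult_le:
  fixes b m :: "'a \<Rightarrow> complex"
  assumes "b \<in> borel_measurable M"
    and "AE x in M. norm (b x) \<le> C" and "integrable M m"
  shows "norm (\<integral>x. b x * m x \<partial>M) \<le> C * (\<integral>x. norm (m x) \<partial>M)"
  using integral_norm_bound integral_norm_bounded_mult_le[OF assms] by (rule order_trans)

lemma integral_bounded_mult_indicator_Un:
  fixes b k :: "'a \<Rightarrow> complex"
  assumes [measurable]: "b \<in> borel_measurable M" "A \<in> sets M" "B \<in> sets M"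
    and b_bdd: "AE x in M. norm (b x) \<le> C" and k: "integrable M k" and "A \<inter> B = {}"
  shows "(\<integral>x. b x * (indicator (A \<union> B) x * k x) \<partial>M) =
    (\<integral>x. b x * (indicator A x * k x) \<partial>M) + (\<integral>x. b x * (indicator B x * k x) \<partial>M)"
proof -
  have "(\<integral>x. b x * (indicator (A \<union> B) x * k x) \<partial>M) =
      (\<integral>x. b x * (indicator A x * k x) + b x * (indicator B x * k x) \<partial>M)"
    using \<open>A \<inter> B = {}\<close> by (intro Bochner_Integration.integral_cong) (auto simp: indicator_def)
  also have "\<dots> = (\<integral>x. b x * (indicator A x * k x) \<partial>M) + (\<integral>x. b x * (indicator B x * k x) \<partial>M)"
    by (intro Bochner_Integration.integral_add integrable_bounded_mult[OF _ b_bdd]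
        integrable_bounded_mult[where C=1, OF _ _ k]) (auto simp: indicator_def)
  finally show ?thesis .
qed

lemma norm_integral_le_of_weak_limit:
  fixes q :: "'b \<Rightarrow> 'a \<Rightarrow> complex" and H \<phi> :: "'a \<Rightarrow> complex"
  assumes "\<And>s. q s \<in> borel_measurable M"
    and q_bdd: "eventually (\<lambda>s. AE x in M. norm (q s x) \<le> C) F" and "F \<noteq> bot"
    and lim: "((\<lambda>s. \<integral>x. q s x * \<phi> x \<partial>M) \<longlongrightarrow> (\<integral>x. H x * \<phi> x \<partial>M)) F"
    and \<phi>: "integrable M \<phi>"
  shows "norm (\<integral>x. H x * \<phi> x \<partial>M) \<le> C * (\<integral>x. norm (\<phi> x) \<partial>M)"
proof (rule tendsto_upperbound[OF tendsto_norm[OF lim] _ \<open>F \<noteq> bot\<close>])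
  show "eventually (\<lambda>s. norm (\<integral>x. q s x * \<phi> x \<partial>M) \<le> C * (\<integral>x. norm (\<phi> x) \<partial>M)) F"
    using q_bdd by eventually_elim (rule norm_integral_bounded_mult_le[OF assms(1) _ \<phi>])
qed

lemma AE_notin_of_integral_le:
  fixes f :: "'a \<Rightarrow> real"
  assumes [measurable]: "E \<in> sets M" and "emeasure M E < \<infinity>"
    and gt: "\<And>x. x \<in> E \<Longrightarrow> C < f x" and int: "integrable M (\<lambda>x. indicator E x * f x)"
    and le: "(\<integral>x. indicator E x * f x \<partial>M) \<le> C * measure M E"
  shows "AE x in M. x \<notin> E"
proof -
  have int_E: "integrable M (indicator E :: 'a \<Rightarrow> real)"
    using assms(2) by simp
  have "(\<integral>x. indicator E x * (f x - C) \<partial>M) = (\<integral>x. indicator E x * f x - C * indicator E x \<partial>M)"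
    by (simp add: right_diff_distrib mult_ac)
  also have "\<dots> = (\<integral>x. indicator E x * f x \<partial>M) - C * measure M E"
    using int int_E by (subst Bochner_Integration.integral_diff) simp_all
  finally have "(\<integral>x. indicator E x * (f x - C) \<partial>M) = 0"
    using le gt by (intro antisym integral_nonneg_AE) (auto simp: indicator_def less_imp_le)
  moreover have "integrable M (\<lambda>x. indicator E x * (f x - C))"
    using int int_E by (simp add: right_diff_distrib mult_ac)
  ultimately have "AE x in M. indicator E x * (f x - C) = 0"
    using gt by (subst (asm) integral_nonneg_eq_0_iff_AE) (auto simp: indicator_def less_imp_le)
  then show ?thesis
    by (rule AE_mp) (auto intro!: AE_I2 dest: gt simp: indicator_def)
qed

lemma AE_norm_le_on_finite_of_weak_limit:
  fixes q :: "'b \<Rightarrow> 'a \<Rightarrow> complex" and H :: "'a \<Rightarrow> complex"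
  assumes [measurable]: "K \<in> sets M" and "emeasure M K < \<infinity>"
    and [measurable]: "H \<in> borel_measurable M" and H_bdd: "AE x in M. norm (H x) \<le> B"
    and "\<And>s. q s \<in> borel_measurable M"
    and "eventually (\<lambda>s. AE x in M. norm (q s x) \<le> C) F" and "F \<noteq> bot" and "0 \<le> C"
    and lim: "\<And>\<phi>. integrable M \<phi> \<Longrightarrow> ((\<lambda>s. \<integral>x. q s x * \<phi> x \<partial>M) \<longlongrightarrow> (\<integral>x. H x * \<phi> x \<partial>M)) F"
  shows "AE x in M. x \<in> K \<longrightarrow> norm (H x) \<le> C"
proof -
  define E where "E = {x \<in> space M. x \<in> K \<and> C < norm (H x)}"
  have [measurable]: "E \<in> sets M" unfolding E_def by measurable
  have "emeasure M E \<le> emeasure M K"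
    by (rule emeasure_mono) (auto simp: E_def)
  then have fin_E: "emeasure M E < \<infinity>"
    using assms(2) by (rule le_less_trans)
  then have int_E: "integrable M (indicator E :: 'a \<Rightarrow> real)" by simp
  \<comment> \<open>test against the phase of H on the set E where the bound fails\<close>
  define S where "S x = indicator E x * (cnj (H x) / norm (H x))" for x
  have [measurable]: "(\<lambda>x. cnj (H x)) \<in> borel_measurable M"
    by (rule borel_measurable_continuous_on[where f=cnj]) (auto intro: continuous_intros)
  have [measurable]: "S \<in> borel_measurable M" unfolding S_def by measurable
  have norm_S: "norm (S x) \<le> indicator E x" for x
    by (cases "H x = 0") (auto simp: S_def indicator_def norm_divide)
  have int_S: "integrable M S"
    by (rule Bochner_Integration.integrable_bound[OF int_E]) (use norm_S in auto)
  have HS: "H x * S x = of_real (indicator E x * norm (H x))" for x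
    by (cases "H x = 0")
      (auto simp: S_def indicator_def field_simps complex_norm_square[symmetric] power2_eq_square)
  have int_EH: "integrable M (\<lambda>x. indicator E x * norm (H x))"
  proof (rule Bochner_Integration.integrable_bound)
    show "integrable M (\<lambda>x. max B 0 * indicator E x)" using int_E by simp
    show "AE x in M. norm (indicator E x * norm (H x)) \<le> norm (max B 0 * indicator E x)"
      using H_bdd by eventually_elim (auto simp: indicator_def)
  qed simp
  have "(\<integral>x. H x * S x \<partial>M) = of_real (\<integral>x. indicator E x * norm (H x) \<partial>M)"
    by (simp only: HS integral_complex_of_real)
  then have "(\<integral>x. indicator E x * norm (H x) \<partial>M) \<le> norm (\<integral>x. H x * S x \<partial>M)"
    by simp
  also have "\<dots> \<le> C * (\<integral>x. norm (S x) \<partial>M)"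
    by (rule norm_integral_le_of_weak_limit[OF assms(5-7) lim[OF int_S] int_S])
  also have "\<dots> \<le> C * (\<integral>x. indicator E x \<partial>M)"
    using int_S int_E norm_S \<open>0 \<le> C\<close> by (intro mult_left_mono integral_mono) auto
  also have "\<dots> = C * measure M E"
    using fin_E by simp
  finally have "AE x in M. x \<notin> E"
    by (intro AE_notin_of_integral_le[OF _ fin_E _ int_EH]) (auto simp: E_def)
  then show ?thesis
    by (rule AE_mp) (auto intro!: AE_I2 simp: E_def)
qed

lemma AE_norm_le_of_weak_limit:
  fixes q :: "'b \<Rightarrow> 'a \<Rightarrow> complex" and H :: "'a \<Rightarrow> complex"
  assumes "sigma_finite_measure M"
    and "H \<in> borel_measurable M" and "AE x in M. norm (H x) \<le> B"
    and "\<And>s. q s \<in> borel_measurable M"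
    and "eventually (\<lambda>s. AE x in M. norm (q s x) \<le> C) F" and "F \<noteq> bot" and "0 \<le> C"
    and "\<And>\<phi>. integrable M \<phi> \<Longrightarrow> ((\<lambda>s. \<integral>x. q s x * \<phi> x \<partial>M) \<longlongrightarrow> (\<integral>x. H x * \<phi> x \<partial>M)) F"
  shows "AE x in M. norm (H x) \<le> C"
proof -
  obtain K :: "nat \<Rightarrow> 'a set" where K: "range K \<subseteq> sets M" "(\<Union>i. K i) = space M"
    and fin: "\<And>i. emeasure M (K i) \<noteq> \<infinity>"
    using sigma_finite_measure.sigma_finite[OF assms(1)] by metis
  have on_K: "AE x in M. \<forall>i. x \<in> K i \<longrightarrow> norm (H x) \<le> C"
    using K(1) fin \<open>F \<noteq> bot\<close>
    by (subst AE_all_countable) (auto intro!: AE_norm_le_on_finite_of_weak_limit assms(2-8) simp: less_top)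
  show ?thesis
    using on_K
  proof (rule AE_mp)
    show "AE x in M. (\<forall>i. x \<in> K i \<longrightarrow> norm (H x) \<le> C) \<longrightarrow> norm (H x) \<le> C"
      using K(2) by (intro AE_I2) blast
  qed
qed

section \<open>Convolution on the real line\<close>

lemma integrable_convolution_product:
  fixes b p k :: "real \<Rightarrow> complex"
  assumes [measurable]: "b \<in> borel_measurable borel"
    and b_bdd: "AE q in lborel. norm (b q) \<le> C"
    and p: "integrable lborel p" and k: "integrable lborel k"
  shows "integrable (lborel \<Otimes>\<^sub>M lborel) (\<lambda>(t, q). b q * p (t - q) * k t)"
proof (rule lborel_pair.Fubini_integrable)
  have [measurable]: "p \<in> borel_measurable borel" "k \<in> borel_measurable borel"
    using p k by (simp_all add: borel_measurable_integrable)
  show "(\<lambda>(t, q). b q * p (t - q) * k t) \<in> borel_measurable (lborel \<Otimes>\<^sub>M lborel)"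
    by measurable
  have p_t: "integrable lborel (\<lambda>q. p (t - q))" for t
    using p by (simp add: integrable_lborel_reflect_iff)
  have bp_t: "integrable lborel (\<lambda>q. b q * p (t - q))" for t
    by (rule integrable_bounded_mult[OF _ b_bdd p_t]) simp
  then show "AE t in lborel. integrable lborel (\<lambda>q. case (t, q) of (t, q) \<Rightarrow> b q * p (t - q) * k t)"
    by (auto intro!: integrable_mult_left)
  define P where "P = (LINT q|lborel. norm (p q))"
  have bound: "norm (LINT q|lborel. norm (b q * p (t - q) * k t)) \<le> norm ((C * P) *\<^sub>R k t)" for t
  proof -
    have bp_le: "(LINT q|lborel. norm (b q * p (t - q))) \<le> C * P"
      using integral_norm_bounded_mult_le[OF _ b_bdd p_t] integral_lborel_reflect[of "\<lambda>q. norm (p q)" t]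
      by (simp add: P_def)
    have "norm (LINT q|lborel. norm (b q * p (t - q) * k t)) =
        (LINT q|lborel. norm (b q * p (t - q))) * norm (k t)"
      by (simp add: norm_mult)
    also have "\<dots> \<le> \<bar>C * P\<bar> * norm (k t)"
      using bp_le by (intro mult_right_mono) auto
    also have "\<dots> = norm ((C * P) *\<^sub>R k t)"
      by simp
    finally show ?thesis .
  qed
  show "integrable lborel (\<lambda>t. LINT q|lborel. norm (case (t, q) of (t, q) \<Rightarrow> b q * p (t - q) * k t))"
  proof (rule Bochner_Integration.integrable_bound)
    show "integrable lborel (\<lambda>t. (C * P) *\<^sub>R k t)"
      using k by (rule integrable_scaleR_right)
    show "(\<lambda>t. LINT q|lborel. norm (case (t, q) of (t, q) \<Rightarrow> b q * p (t - q) * k t)) \<in> borel_measurable lborel"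
      by (rule lborel.borel_measurable_lebesgue_integral) measurable
    show "AE t in lborel. norm (LINT q|lborel. norm (case (t, q) of (t, q) \<Rightarrow> b q * p (t - q) * k t))
        \<le> norm ((C * P) *\<^sub>R k t)"
      using bound by simp
  qed
qed

lemma integral_convolution_swap:
  fixes b p k :: "real \<Rightarrow> complex"
  assumes "b \<in> borel_measurable borel" and "AE q in lborel. norm (b q) \<le> C"
    and "integrable lborel p" and "integrable lborel k"
  shows "(LINT t|lborel. (LINT q|lborel. b q * p (t - q)) * k t) =
         (LINT q|lborel. b q * (LINT t|lborel. p (t - q) * k t))"
proof -
  have "(LINT t|lborel. (LINT q|lborel. b q * p (t - q)) * k t) =
      (LINT t|lborel. LINT q|lborel. b q * p (t - q) * k t)"
    by simp
  also have "\<dots> = (LINT q|lborel. LINT t|lborel. b q * p (t - q) * k t)"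
    using lborel_pair.Fubini_integral[OF integrable_convolution_product[OF assms]] by simp
  also have "\<dots> = (LINT q|lborel. b q * (LINT t|lborel. p (t - q) * k t))"
    by (simp add: mult.assoc)
  finally show ?thesis .
qed

lemma integrable_convolution_adjoint:
  fixes p k :: "real \<Rightarrow> complex"
  assumes "integrable lborel p" and "integrable lborel k"
  shows "integrable lborel (\<lambda>q. LINT t|lborel. p (t - q) * k t)"
  using lborel_pair.integrable_snd[OF integrable_convolution_product[of "\<lambda>_. 1" 1, OF _ _ assms]]
  by simp

lemma dist_integral_cutoff_le:
  fixes b k :: "real \<Rightarrow> complex"
  assumes [measurable]: "b \<in> borel_measurable borel"
    and b_bdd: "AE t in lborel. norm (b t) \<le> C" and k: "integrable lborel k"
  shows "dist (LINT t|lborel. b t * k t) (LINT t|lborel. b t * (indicator {c..} t * k t))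
    \<le> C * (LINT t|lborel. indicator {..<c} t * norm (k t))"
proof -
  have cutoff: "integrable lborel (\<lambda>t. indicator A t * k t)" if [measurable]: "A \<in> sets borel" for A
    by (rule integrable_bounded_mult[where C=1, OF _ _ k]) (auto simp: indicator_def)
  have "(LINT t|lborel. b t * k t) =
      (LINT t|lborel. b t * (indicator {c..} t * k t) + b t * (indicator {..<c} t * k t))"
    by (intro Bochner_Integration.integral_cong) (auto simp: indicator_def)
  also have "\<dots> = (LINT t|lborel. b t * (indicator {c..} t * k t)) + (LINT t|lborel. b t * (indicator {..<c} t * k t))"
    by (intro Bochner_Integration.integral_add integrable_bounded_mult[OF _ b_bdd] cutoff) simp_all
  finally have "dist (LINT t|lborel. b t * k t) (LINT t|lborel. b t * (indicator {c..} t * k t)) =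
      norm (LINT t|lborel. b t * (indicator {..<c} t * k t))"
    by (simp add: dist_norm)
  also have "\<dots> \<le> C * (LINT t|lborel. norm (indicator {..<c} t * k t))"
    by (intro norm_integral_bounded_mult_le[OF _ b_bdd] cutoff) simp_all
  also have "(LINT t|lborel. norm (indicator {..<c} t * k t)) = (LINT t|lborel. indicator {..<c} t * norm (k t))"
    by (intro Bochner_Integration.integral_cong) (auto simp: indicator_def)
  finally show ?thesis .
qed

text \<open>b is the weak* limit in L\<infinity>(\<real>) along \<Phi> of the translates a(s + \<cdot>), cut off below -s.
  For a = f \<circ> exp this is the function f(e^s \<cdot>), extended by 0 on (0, e^(-s)), read in
  logarithmic coordinates.\<close>
definition weak_limit_translates :: "(real \<Rightarrow> complex) \<Rightarrow> real filter \<Rightarrow> (real \<Rightarrow> complex) \<Rightarrow> bool" where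
  "weak_limit_translates a \<Phi> b \<longleftrightarrow> (\<forall>k. integrable lborel k \<longrightarrow>
     ((\<lambda>s. LINT t|lborel. indicator {-s..} t * a (s + t) * k t) \<longlongrightarrow> (LINT t|lborel. b t * k t)) \<Phi>)"

lemma integral_cutoff_translate_convolution:
  fixes a p k :: "real \<Rightarrow> complex"
  assumes [measurable]: "a \<in> borel_measurable borel"
    and a_bdd: "AE y in lborel. 0 \<le> y \<longrightarrow> norm (a y) \<le> C" and "0 \<le> C"
    and p: "integrable lborel p" and p_eq_0: "\<And>y. y < 0 \<Longrightarrow> p y = 0"
    and k: "integrable lborel k"
  shows "(LINT t|lborel. indicator {-s..} t * (LINT r|lborel. indicator {0..} r * a r * p (s + t - r)) * k t) =
    (LINT q|lborel. indicator {-s..} q * a (s + q) * (LINT t|lborel. p (t - q) * k t))"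
proof -
  define a_s where "a_s q = indicator {-s..} q * a (s + q)" for q
  have [measurable]: "a_s \<in> borel_measurable borel" unfolding a_s_def by measurable
  have "AE q in lborel. 0 \<le> s + q \<longrightarrow> norm (a (s + q)) \<le> C"
    by (rule AE_lborel_translate[OF _ a_bdd]) measurable
  then have a_s_bdd: "AE q in lborel. norm (a_s q) \<le> C"
    by eventually_elim (use \<open>0 \<le> C\<close> in \<open>auto simp: a_s_def indicator_def\<close>)
  \<comment> \<open>since p vanishes on the negative axis, the cut-off at -s can be moved inside the convolution\<close>
  have "indicator {-s..} t * (LINT r|lborel. indicator {0..} r * a r * p (s + t - r)) =
      (LINT q|lborel. a_s q * p (t - q))" for t
  proof -
    have "(LINT r|lborel. indicator {0..} r * a r * p (s + t - r)) = (LINT q|lborel. a_s q * p (t - q))"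
      by (subst integral_lborel_translate[where c=s])
        (auto simp: a_s_def indicator_def intro!: Bochner_Integration.integral_cong)
    moreover have "(\<lambda>q. a_s q * p (t - q)) = (\<lambda>q. 0)" if "t < -s"
      using that p_eq_0 by (auto simp: a_s_def indicator_def)
    ultimately show ?thesis by (auto simp: indicator_def)
  qed
  then have "(LINT t|lborel. indicator {-s..} t * (LINT r|lborel. indicator {0..} r * a r * p (s + t - r)) * k t) =
      (LINT t|lborel. (LINT q|lborel. a_s q * p (t - q)) * k t)"
    by simp
  also have "\<dots> = (LINT q|lborel. a_s q * (LINT t|lborel. p (t - q) * k t))"
    by (rule integral_convolution_swap[OF _ a_s_bdd p k]) simp
  finally show ?thesis by (simp add: a_s_def)
qed

lemma weak_limit_translates_convolution:
  fixes a b p :: "real \<Rightarrow> complex"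
  assumes [measurable]: "a \<in> borel_measurable borel" "b \<in> borel_measurable borel"
    and a_bdd: "AE y in lborel. 0 \<le> y \<longrightarrow> norm (a y) \<le> C"
    and b_bdd: "AE y in lborel. norm (b y) \<le> C" and "0 \<le> C"
    and p: "integrable lborel p" and p_eq_0: "\<And>y. y < 0 \<Longrightarrow> p y = 0"
    and lim: "weak_limit_translates a \<Phi> b"
  shows "weak_limit_translates (\<lambda>y. LINT r|lborel. indicator {0..} r * a r * p (y - r)) \<Phi>
           (\<lambda>y. LINT r|lborel. b (y - r) * p r)"
  unfolding weak_limit_translates_def
proof (intro allI impI)
  fix k :: "real \<Rightarrow> complex" assume k: "integrable lborel k"
  define K where "K q = (LINT t|lborel. p (t - q) * k t)" for q
  have "integrable lborel K" unfolding K_def by (rule integrable_convolution_adjoint[OF p k])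
  then have "((\<lambda>s. LINT q|lborel. indicator {-s..} q * a (s + q) * K q) \<longlongrightarrow> (LINT q|lborel. b q * K q)) \<Phi>"
    using lim by (simp add: weak_limit_translates_def)
  moreover have "(LINT q|lborel. b q * K q) = (LINT t|lborel. (LINT r|lborel. b (t - r) * p r) * k t)"
  proof -
    have "(LINT q|lborel. b q * K q) = (LINT t|lborel. (LINT q|lborel. b q * p (t - q)) * k t)"
      unfolding K_def by (rule integral_convolution_swap[OF _ b_bdd p k, symmetric]) simp
    also have "\<dots> = (LINT t|lborel. (LINT r|lborel. b (t - r) * p r) * k t)"
      using integral_lborel_reflect[of "\<lambda>q. b q * p (t - q)" t for t] by simp
    finally show ?thesis .
  qed
  ultimately show "((\<lambda>s. LINT t|lborel. indicator {-s..} t *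
        (LINT r|lborel. indicator {0..} r * a r * p (s + t - r)) * k t) \<longlongrightarrow>
      (LINT t|lborel. (LINT r|lborel. b (t - r) * p r) * k t)) \<Phi>"
    by (simp add: integral_cutoff_translate_convolution[OF _ a_bdd \<open>0 \<le> C\<close> p p_eq_0 k] K_def)
qed

lemma tendsto_by_approximation:
  fixes X :: "'a \<Rightarrow> 'b::metric_space"
  assumes approx_lim: "\<And>N. (Y N \<longlongrightarrow> L' N) F"
    and approx: "\<And>N. eventually (\<lambda>s. dist (X s) (Y N s) \<le> e N) F"
    and approx_L: "\<And>N. dist L (L' N) \<le> e N"
    and e: "e \<longlonglongrightarrow> 0"
  shows "(X \<longlongrightarrow> L) F"
proof (rule tendstoI)
  fix \<epsilon> :: real assume "\<epsilon> > 0"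
  then have "eventually (\<lambda>N. dist (e N) 0 < \<epsilon> / 3) sequentially"
    using e by (intro tendstoD) simp_all
  then obtain N where "dist (e N) 0 < \<epsilon> / 3"
    unfolding eventually_sequentially by blast
  then have N: "e N < \<epsilon> / 3" by (simp add: dist_real_def)
  have "eventually (\<lambda>s. dist (Y N s) (L' N) < \<epsilon> / 3) F"
    using approx_lim[of N] by (rule tendstoD) (use \<open>\<epsilon> > 0\<close> in simp)
  then show "eventually (\<lambda>s. dist (X s) L < \<epsilon>) F"
    using approx[of N]
  proof eventually_elim
    case (elim s)
    have "dist (X s) L \<le> dist (X s) (Y N s) + dist (Y N s) (L' N) + dist L (L' N)"
      by (metis add.commute add_left_mono dist_commute dist_triangle order_trans)
    also have "\<dots> < \<epsilon>" using elim approx_L[of N] N by simp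
    finally show ?case .
  qed
qed

lemma tendsto_integral_norm_lower_tail:
  fixes k :: "real \<Rightarrow> 'a::{banach, second_countable_topology}"
  assumes "integrable lborel k"
  shows "(\<lambda>N::nat. LINT t|lborel. indicator {..< - real N} t * norm (k t)) \<longlonglongrightarrow> 0"
proof -
  have [measurable]: "k \<in> borel_measurable borel"
    using assms by (simp add: borel_measurable_integrable)
  have lim: "AE t in lborel. (\<lambda>N::nat. indicator {..< - real N} t * norm (k t)) \<longlonglongrightarrow> 0"
  proof (rule AE_I2)
    fix t :: real
    obtain N0 :: nat where "- t \<le> real N0" using real_arch_simple by blast
    then have "eventually (\<lambda>N::nat. indicator {..< - real N} t * norm (k t) = 0) sequentially"
      unfolding eventually_sequentially by (intro exI[of _ N0]) (auto simp: indicator_def)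
    then show "(\<lambda>N::nat. indicator {..< - real N} t * norm (k t)) \<longlonglongrightarrow> 0"
      by (rule tendsto_eventually)
  qed
  have bound: "AE t in lborel. norm (indicator {..< - real N} t * norm (k t)) \<le> norm (k t)" for N :: nat
    by (auto simp: indicator_def)
  have "integrable lborel (\<lambda>t. norm (k t))" using assms by simp
  from Bochner_Integration.integral_dominated_convergence[OF _ _ this lim bound]
  show ?thesis by simp
qed

section \<open>Points of \<Omega>*\<close>

lemma free_uf_eventually_ge:
  assumes "free_uf \<eta>"
  shows "eventually (\<lambda>n. K \<le> n) \<eta>"
proof -
  have "eventually (\<lambda>n. n \<noteq> m) \<eta>" for m
    using assms unfolding free_uf_def is_ultrafilter_def by metis
  then have "eventually (\<lambda>n. \<forall>m\<in>{..<K}. n \<noteq> m) \<eta>"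
    by (intro eventually_ball_finite) auto
  then show ?thesis by eventually_elim (auto simp: not_less[symmetric])
qed

lemma omega_filter_eventually_ge:
  assumes "free_uf \<eta>" and "0 \<le> u"
  shows "eventually (\<lambda>s. c \<le> s) (omega_filter (\<eta>, u))"
proof -
  have "eventually (\<lambda>n. nat \<lceil>c\<rceil> \<le> n) \<eta>" by (rule free_uf_eventually_ge[OF assms(1)])
  then have "eventually (\<lambda>n. c \<le> u + real n) \<eta>"
    by eventually_elim (use assms(2) in linarith)
  then show ?thesis by (simp add: omega_filter_def eventually_filtermap)
qed

lemma omega_filter_eventually_nonneg:
  assumes "0 \<le> snd \<omega>"
  shows "eventually (\<lambda>s. 0 \<le> s) (omega_filter \<omega>)"
  using assms by (simp add: omega_filter_def eventually_filtermap)

lemma omega_filter_neq_bot: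
  assumes "fst \<omega> \<noteq> bot"
  shows "omega_filter \<omega> \<noteq> bot"
  using assms by (simp add: omega_filter_def filtermap_bot_iff)

lemma free_uf_neq_bot: "free_uf \<eta> \<Longrightarrow> \<eta> \<noteq> bot"
  by (simp add: free_uf_def is_ultrafilter_def)

lemma tau_s_minus_nat:
  assumes "0 \<le> u" and "u < 1"
  shows "tau_s (- real N) (\<eta>, u) = (tau_pow (- int N) \<eta>, u)"
proof -
  have "\<lfloor>u + - real N\<rfloor> = - int N"
    using assms by (intro floor_unique) auto
  then show ?thesis by (simp add: tau_s_def)
qed

lemma tendsto_omega_filter_tau_s:
  assumes "free_uf \<eta>" and "0 \<le> u" and "u < 1"
  shows "(X \<longlongrightarrow> L) (omega_filter (tau_s (- real N) (\<eta>, u))) \<longleftrightarrow>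
         ((\<lambda>s. X (s - real N)) \<longlongrightarrow> L) (omega_filter (\<eta>, u))"
proof -
  have "(X \<longlongrightarrow> L) (omega_filter (tau_s (- real N) (\<eta>, u))) \<longleftrightarrow>
        ((\<lambda>n. X (u + real (nat (int n - int N)))) \<longlongrightarrow> L) \<eta>"
    using assms by (simp add: tau_s_minus_nat omega_filter_def tau_pow_def filterlim_filtermap)
  also have "\<dots> \<longleftrightarrow> ((\<lambda>n. X (u + real n - real N)) \<longlongrightarrow> L) \<eta>"
    using free_uf_eventually_ge[OF assms(1), of N]
    by (intro tendsto_cong) (auto elim!: eventually_mono simp: of_nat_diff add_diff_eq)
  also have "\<dots> \<longleftrightarrow> ((\<lambda>s. X (s - real N)) \<longlongrightarrow> L) (omega_filter (\<eta>, u))"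
    by (simp add: omega_filter_def filterlim_filtermap)
  finally show ?thesis .
qed

lemma tau_s_zero:
  assumes "0 \<le> u" and "u < 1"
  shows "tau_s 0 (\<eta>, u) = (\<eta>, u)"
  using tau_s_minus_nat[OF assms, of 0 \<eta>] by (simp add: tau_pow_def)

section \<open>The weak* limits in logarithmic coordinates\<close>

lemma wlim_rep_tendsto_log:
  fixes g G k :: "real \<Rightarrow> complex"
  assumes "wlim_rep g \<omega> G" and [measurable]: "g \<in> borel_measurable borel"
    and k: "integrable lborel k"
  shows "((\<lambda>s. LINT y|lborel. indicator {0..} y * g (exp (s + y)) * k y)
          \<longlongrightarrow> (LINT y|lborel. indicator {0..} y * G (exp y) * k y)) (omega_filter \<omega>)"
proof -
  have [measurable]: "G \<in> borel_measurable borel"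
    using assms(1) by (simp add: wlim_rep_def Linf1_def)
  have [measurable]: "k \<in> borel_measurable borel"
    using k by (simp add: borel_measurable_integrable)
  define \<phi> where "\<phi> t = k (ln t)" for t
  have [measurable]: "\<phi> \<in> borel_measurable borel" unfolding \<phi>_def by measurable
  have "integrable lborel (\<lambda>y. indicator {0..} y * \<phi> (exp y))"
    by (rule Bochner_Integration.integrable_bound[OF k]) (auto simp: \<phi>_def indicator_def)
  then have "integrable haar1 \<phi>" by (simp add: integrable_haar1_iff_exp)
  then have "((\<lambda>s. LINT t|haar1. g (exp s * t) * \<phi> t) \<longlongrightarrow> (LINT t|haar1. G t * \<phi> t)) (omega_filter \<omega>)"
    using assms(1) by (simp add: wlim_rep_def)
  then show ?thesis
    by (simp add: integral_haar1_exp \<phi>_def exp_add mult.assoc)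
qed

lemma wlim_rep_norm_le:
  fixes g h :: "real \<Rightarrow> complex"
  assumes [measurable]: "g \<in> borel_measurable borel"
    and g_bdd: "AE t in haar1. norm (g t) \<le> C" and "0 \<le> C"
    and "0 \<le> snd \<omega>" and "fst \<omega> \<noteq> bot" and W: "wlim_rep g \<omega> h"
  shows "AE t in haar1. norm (h t) \<le> C"
proof -
  obtain B where h_bdd: "AE t in haar1. norm (h t) \<le> B" and [measurable]: "h \<in> borel_measurable borel"
    using W by (auto simp: wlim_rep_def Linf1_def)
  show ?thesis
  proof (rule AE_norm_le_of_weak_limit[OF sigma_finite_haar1 _ h_bdd])
    show "h \<in> borel_measurable haar1" by (simp add: haar1_def)
    show "(\<lambda>t. g (exp s * t)) \<in> borel_measurable haar1" for s
      by (simp add: haar1_def)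
    show "eventually (\<lambda>s. AE t in haar1. norm (g (exp s * t)) \<le> C) (omega_filter \<omega>)"
      using omega_filter_eventually_nonneg[OF assms(4)]
      by eventually_elim (rule AE_haar1_scale[OF _ _ g_bdd]; simp)
    show "omega_filter \<omega> \<noteq> bot" by (rule omega_filter_neq_bot) fact
    show "0 \<le> C" by fact
    show "((\<lambda>s. LINT t|haar1. g (exp s * t) * \<phi> t) \<longlongrightarrow> (LINT t|haar1. h t * \<phi> t)) (omega_filter \<omega>)"
      if "integrable haar1 \<phi>" for \<phi>
      using W that by (simp add: wlim_rep_def)
  qed
qed

lemma tendsto_translates_on_piece:
  fixes g G F k :: "real \<Rightarrow> complex"
  assumes free: "free_uf \<eta>" and u: "0 \<le> u" "u < 1"
    and [measurable]: "g \<in> borel_measurable borel" "F \<in> borel_measurable borel" "I \<in> sets borel"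
    and W: "wlim_rep g (tau_s (- real N) (\<eta>, u)) G"
    and I: "I \<subseteq> {- real N..}"
    and FG: "AE y in lborel. y \<in> I \<longrightarrow> F (exp y) = G (exp (real N + y))"
    and k: "integrable lborel k"
  shows "((\<lambda>s. LINT t|lborel. indicator {-s..} t * g (exp (s + t)) * (indicator I t * k t))
          \<longlongrightarrow> (LINT t|lborel. F (exp t) * (indicator I t * k t))) (omega_filter (\<eta>, u))"
proof -
  have [measurable]: "G \<in> borel_measurable borel"
    using W by (simp add: wlim_rep_def Linf1_def)
  have [measurable]: "k \<in> borel_measurable borel"
    using k by (simp add: borel_measurable_integrable)
  define k' where "k' y = indicator I (y - real N) * k (y - real N)" for y
  have "integrable lborel (\<lambda>t. indicator I t * k t)"
    by (rule integrable_bounded_mult[where C=1, OF _ _ k]) (auto simp: indicator_def)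
  then have "integrable lborel k'"
    unfolding k'_def using integrable_lborel_translate_iff[of "\<lambda>t. indicator I t * k t" "- real N"] by simp
  from wlim_rep_tendsto_log[OF W _ this]
  have "((\<lambda>s. LINT y|lborel. indicator {0..} y * g (exp (s - real N + y)) * k' y)
      \<longlongrightarrow> (LINT y|lborel. indicator {0..} y * G (exp y) * k' y)) (omega_filter (\<eta>, u))"
    by (simp add: tendsto_omega_filter_tau_s[OF free u])
  moreover have "eventually (\<lambda>s. (LINT y|lborel. indicator {0..} y * g (exp (s - real N + y)) * k' y) =
      (LINT t|lborel. indicator {-s..} t * g (exp (s + t)) * (indicator I t * k t))) (omega_filter (\<eta>, u))"
    using omega_filter_eventually_ge[OF free u(1), of "real N"]
  proof eventually_elim
    case (elim s)
    show ?case
      using I elim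
      by (subst integral_lborel_translate[where c="real N"])
        (auto simp: k'_def indicator_def intro!: Bochner_Integration.integral_cong)
  qed
  moreover have "(LINT y|lborel. indicator {0..} y * G (exp y) * k' y) =
      (LINT t|lborel. F (exp t) * (indicator I t * k t))"
  proof (subst integral_lborel_translate[where c="real N"], rule integral_cong_AE)
    show "AE t in lborel. indicator {0..} (real N + t) * G (exp (real N + t)) * k' (real N + t) =
        F (exp t) * (indicator I t * k t)"
      using FG by eventually_elim (use I in \<open>auto simp: k'_def indicator_def\<close>)
  qed (simp_all add: k'_def)
  ultimately show ?thesis
    by (simp add: tendsto_cong)
qed

lemma ext_rep_log:
  assumes E: "ext_rep g (\<eta>, u) F" and u: "0 \<le> u" "u < 1"
  obtains G where "\<And>N. wlim_rep g (tau_s (- real N) (\<eta>, u)) (G N)"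
    and "AE y in lborel. 0 \<le> y \<longrightarrow> F (exp y) = G 0 (exp y)"
    and "\<And>N. AE y in lborel. - real N \<le> y \<and> y < 0 \<longrightarrow> F (exp y) = G N (exp (real N + y))"
proof -
  have [measurable]: "F \<in> borel_measurable borel"
    using E by (simp add: ext_rep_def)
  obtain h where h: "wlim_rep g (\<eta>, u) h" and Fh: "AE x in haar. 1 \<le> x \<longrightarrow> F x = h x"
    using E by (auto simp: ext_rep_def)
  have "\<forall>N. \<exists>G. 0 < N \<longrightarrow> wlim_rep g (tau_s (- real N) (\<eta>, u)) G \<and>
      (AE x in haar. exp (- real N) \<le> x \<and> x \<le> 1 \<longrightarrow> F x = G (exp (real N) * x))"
    using E by (auto simp: ext_rep_def)
  from choice[OF this] obtain G' where G'_all: "\<forall>N. 0 < N \<longrightarrow> wlim_rep g (tau_s (- real N) (\<eta>, u)) (G' N) \<and>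
      (AE x in haar. exp (- real N) \<le> x \<and> x \<le> 1 \<longrightarrow> F x = G' N (exp (real N) * x))"
    by blast
  then have G': "\<And>N. 0 < N \<Longrightarrow> wlim_rep g (tau_s (- real N) (\<eta>, u)) (G' N)"
    and FG': "\<And>N. 0 < N \<Longrightarrow> AE x in haar. exp (- real N) \<le> x \<and> x \<le> 1 \<longrightarrow> F x = G' N (exp (real N) * x)"
    by simp_all
  define G where "G N = (if N = 0 then h else G' N)" for N
  show ?thesis
  proof
    show "wlim_rep g (tau_s (- real N) (\<eta>, u)) (G N)" for N
      using h G' tau_s_zero[OF u] by (simp add: G_def)
    have [measurable]: "h \<in> borel_measurable borel"
      using h by (simp add: wlim_rep_def Linf1_def)
    have "{x \<in> space borel. 1 \<le> x \<longrightarrow> F x = h x} \<in> sets borel" by measurable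
    then show "AE y in lborel. 0 \<le> y \<longrightarrow> F (exp y) = G 0 (exp y)"
      using Fh by (simp add: AE_haar_iff_exp G_def)
    show "AE y in lborel. - real N \<le> y \<and> y < 0 \<longrightarrow> F (exp y) = G N (exp (real N + y))" for N
    proof (cases "N = 0")
      case False
      have [measurable]: "G' N \<in> borel_measurable borel"
        using G'[of N] False by (simp add: wlim_rep_def Linf1_def)
      have "{x \<in> space borel. exp (- real N) \<le> x \<and> x \<le> 1 \<longrightarrow> F x = G' N (exp (real N) * x)} \<in> sets borel"
        by measurable
      then have "AE y in lborel. exp (- real N) \<le> exp y \<and> exp y \<le> 1 \<longrightarrow> F (exp y) = G' N (exp (real N) * exp y)"
        using FG'[OF False[unfolded neq0_conv]] by (simp only: AE_haar_iff_exp)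
      then show ?thesis
        by eventually_elim (use False in \<open>auto simp: G_def exp_add\<close>)
    qed (intro AE_I2, auto)
  qed
qed

lemma wlim_rep_tau_s_norm_le:
  assumes "free_uf \<eta>" and "0 \<le> u" "u < 1"
    and "g \<in> borel_measurable borel" and "AE t in haar1. norm (g t) \<le> C" and "0 \<le> C"
    and "wlim_rep g (tau_s (- real N) (\<eta>, u)) G"
  shows "AE y in lborel. 0 \<le> real N + y \<longrightarrow> norm (G (exp (real N + y))) \<le> C"
proof -
  have [measurable]: "G \<in> borel_measurable borel"
    using assms(7) by (simp add: wlim_rep_def Linf1_def)
  have "0 \<le> snd (tau_s (- real N) (\<eta>, u))"
    by (simp add: tau_s_minus_nat[OF assms(2,3)] assms(2))
  moreover have "fst (tau_s (- real N) (\<eta>, u)) \<noteq> bot"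
    using free_uf_neq_bot[OF assms(1)]
    by (simp add: tau_s_minus_nat[OF assms(2,3)] tau_pow_def filtermap_bot_iff)
  ultimately have "AE t in haar1. norm (G t) \<le> C"
    by (rule wlim_rep_norm_le[OF assms(4-6) _ _ assms(7)])
  moreover have "{x \<in> space borel. norm (G x) \<le> C} \<in> sets borel" by measurable
  ultimately have "AE y in lborel. 0 \<le> y \<longrightarrow> norm (G (exp y)) \<le> C"
    by (simp add: AE_haar1_iff_exp)
  then show ?thesis
    by (rule AE_lborel_translate[where P="\<lambda>y. 0 \<le> y \<longrightarrow> norm (G (exp y)) \<le> C", rotated]) measurable
qed

lemma ext_rep_norm_le:
  assumes free: "free_uf \<eta>" and u: "0 \<le> u" "u < 1"
    and "g \<in> borel_measurable borel" and "AE t in haar1. norm (g t) \<le> C" and "0 \<le> C"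
    and E: "ext_rep g (\<eta>, u) F"
  shows "AE y in lborel. norm (F (exp y)) \<le> C"
proof -
  obtain G where G: "\<And>N. wlim_rep g (tau_s (- real N) (\<eta>, u)) (G N)"
    and F0: "AE y in lborel. 0 \<le> y \<longrightarrow> F (exp y) = G 0 (exp y)"
    and FN: "\<And>N. AE y in lborel. - real N \<le> y \<and> y < 0 \<longrightarrow> F (exp y) = G N (exp (real N + y))"
    by (rule ext_rep_log[OF E u]) blast
  have "AE y in lborel. \<forall>N. (- real N \<le> y \<and> y < 0 \<longrightarrow> F (exp y) = G N (exp (real N + y))) \<and>
      (0 \<le> real N + y \<longrightarrow> norm (G N (exp (real N + y))) \<le> C)"
    by (intro AE_all_countable[THEN iffD2] allI eventually_conj FN
        wlim_rep_tau_s_norm_le[OF free u assms(4-6) G])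
  then show ?thesis
    using F0
  proof eventually_elim
    case (elim y)
    show ?case
    proof (cases "0 \<le> y")
      case True
      then show ?thesis using elim(1)[rule_format, of 0] elim(2) by simp
    next
      case False
      define N where "N = nat \<lceil>- y\<rceil>"
      have "real N = of_int \<lceil>- y\<rceil>" using False by (simp add: N_def)
      then have "- real N \<le> y" "0 \<le> real N + y"
        using le_of_int_ceiling[of "- y"] by linarith+
      then show ?thesis using elim(1)[rule_format, of N] False by auto
    qed
  qed
qed

lemma AE_norm_cutoff_translate_le:
  fixes g :: "real \<Rightarrow> complex"
  assumes [measurable]: "g \<in> borel_measurable borel"
    and g_bdd: "AE t in haar1. norm (g t) \<le> C" and "0 \<le> C"
  shows "AE t in lborel. norm (indicator {-s..} t * g (exp (s + t))) \<le> C"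
proof -
  have "AE y in lborel. 0 \<le> y \<longrightarrow> norm (g (exp y)) \<le> C"
    using g_bdd by (subst (asm) AE_haar1_iff_exp) simp_all
  then have "AE t in lborel. 0 \<le> s + t \<longrightarrow> norm (g (exp (s + t))) \<le> C"
    by (rule AE_lborel_translate[rotated]) measurable
  then show ?thesis
    by (rule eventually_mono) (use \<open>0 \<le> C\<close> in \<open>auto simp: indicator_def\<close>)
qed

lemma tendsto_cutoff_translates_of_ext_rep:
  assumes free: "free_uf \<eta>" and u: "0 \<le> u" "u < 1"
    and [measurable]: "g \<in> borel_measurable borel"
    and g_bdd: "AE t in haar1. norm (g t) \<le> C" and "0 \<le> C"
    and E: "ext_rep g (\<eta>, u) F" and k: "integrable lborel k"
  shows "((\<lambda>s. LINT t|lborel. indicator {-s..} t * g (exp (s + t)) * (indicator {- real N..} t * k t))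
      \<longlongrightarrow> (LINT t|lborel. F (exp t) * (indicator {- real N..} t * k t))) (omega_filter (\<eta>, u))"
proof -
  have [measurable]: "F \<in> borel_measurable borel"
    using E by (simp add: ext_rep_def)
  obtain G where G: "\<And>N. wlim_rep g (tau_s (- real N) (\<eta>, u)) (G N)"
    and F0: "AE y in lborel. 0 \<le> y \<longrightarrow> F (exp y) = G 0 (exp y)"
    and FN: "\<And>N. AE y in lborel. - real N \<le> y \<and> y < 0 \<longrightarrow> F (exp y) = G N (exp (real N + y))"
    by (rule ext_rep_log[OF E u]) blast
  have F_bdd: "AE y in lborel. norm (F (exp y)) \<le> C"
    by (rule ext_rep_norm_le[OF free u _ g_bdd \<open>0 \<le> C\<close> E]) simp
  note b_bdd = AE_norm_cutoff_translate_le[OF _ g_bdd \<open>0 \<le> C\<close>]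
  have Ivl: "{- real N..} = {0..} \<union> {- real N..<0}" by auto
  have "(LINT t|lborel. indicator {-s..} t * g (exp (s + t)) * (indicator {- real N..} t * k t)) =
      (LINT t|lborel. indicator {-s..} t * g (exp (s + t)) * (indicator {0..} t * k t)) +
      (LINT t|lborel. indicator {-s..} t * g (exp (s + t)) * (indicator {- real N..<0} t * k t))" for s
    unfolding Ivl by (rule integral_bounded_mult_indicator_Un[OF _ _ _ b_bdd k]) auto
  moreover have "(LINT t|lborel. F (exp t) * (indicator {- real N..} t * k t)) =
      (LINT t|lborel. F (exp t) * (indicator {0..} t * k t)) +
      (LINT t|lborel. F (exp t) * (indicator {- real N..<0} t * k t))"
    unfolding Ivl by (rule integral_bounded_mult_indicator_Un[OF _ _ _ F_bdd k]) auto
  moreover have "((\<lambda>s. LINT t|lborel. indicator {-s..} t * g (exp (s + t)) * (indicator {0..} t * k t))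
      \<longlongrightarrow> (LINT t|lborel. F (exp t) * (indicator {0..} t * k t))) (omega_filter (\<eta>, u))"
    by (rule tendsto_translates_on_piece[OF free u _ _ _ G[of 0] _ _ k]) (use F0 in auto)
  moreover have "((\<lambda>s. LINT t|lborel. indicator {-s..} t * g (exp (s + t)) * (indicator {- real N..<0} t * k t))
      \<longlongrightarrow> (LINT t|lborel. F (exp t) * (indicator {- real N..<0} t * k t))) (omega_filter (\<eta>, u))"
    by (rule tendsto_translates_on_piece[OF free u _ _ _ G[of N] _ _ k]) (use FN[of N] in auto)
  ultimately show ?thesis
    by (simp only:) (rule tendsto_add)
qed

lemma weak_limit_translates_of_ext_rep:
  assumes free: "free_uf \<eta>" and u: "0 \<le> u" "u < 1"
    and [measurable]: "g \<in> borel_measurable borel"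
    and g_bdd: "AE t in haar1. norm (g t) \<le> C" and "0 \<le> C"
    and E: "ext_rep g (\<eta>, u) F"
  shows "weak_limit_translates (\<lambda>y. g (exp y)) (omega_filter (\<eta>, u)) (\<lambda>y. F (exp y))"
  unfolding weak_limit_translates_def
proof (intro allI impI)
  fix k :: "real \<Rightarrow> complex" assume k: "integrable lborel k"
  have [measurable]: "F \<in> borel_measurable borel"
    using E by (simp add: ext_rep_def)
  have F_bdd: "AE y in lborel. norm (F (exp y)) \<le> C"
    by (rule ext_rep_norm_le[OF free u _ g_bdd \<open>0 \<le> C\<close> E]) simp
  note b_bdd = AE_norm_cutoff_translate_le[OF _ g_bdd \<open>0 \<le> C\<close>]
  \<comment> \<open>no single shifted limit G N covers the whole negative axis, so cut k off at -N\<close>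
  show "((\<lambda>s. LINT t|lborel. indicator {-s..} t * g (exp (s + t)) * k t) \<longlongrightarrow> (LINT t|lborel. F (exp t) * k t))
      (omega_filter (\<eta>, u))"
  proof (rule tendsto_by_approximation)
    fix N :: nat
    show "((\<lambda>s. LINT t|lborel. indicator {-s..} t * g (exp (s + t)) * (indicator {- real N..} t * k t))
        \<longlongrightarrow> (LINT t|lborel. F (exp t) * (indicator {- real N..} t * k t))) (omega_filter (\<eta>, u))"
      by (rule tendsto_cutoff_translates_of_ext_rep[OF free u _ g_bdd \<open>0 \<le> C\<close> E k]) simp
    show "eventually (\<lambda>s. dist (LINT t|lborel. indicator {-s..} t * g (exp (s + t)) * k t)
        (LINT t|lborel. indicator {-s..} t * g (exp (s + t)) * (indicator {- real N..} t * k t))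
        \<le> C * (LINT t|lborel. indicator {..< - real N} t * norm (k t))) (omega_filter (\<eta>, u))"
      using dist_integral_cutoff_le[OF _ b_bdd k] by simp
    show "dist (LINT t|lborel. F (exp t) * k t) (LINT t|lborel. F (exp t) * (indicator {- real N..} t * k t))
        \<le> C * (LINT t|lborel. indicator {..< - real N} t * norm (k t))"
      by (rule dist_integral_cutoff_le[OF _ F_bdd k]) simp
  next
    show "(\<lambda>N. C * (LINT t|lborel. indicator {..< - real N} t * norm (k t))) \<longlonglongrightarrow> 0"
      using tendsto_mult_right_zero[OF tendsto_integral_norm_lower_tail[OF k]] by simp
  qed
qed

lemma wlim_rep_tau_s_of_weak_limit_translates:
  assumes free: "free_uf \<eta>" and u: "0 \<le> u" "u < 1"
    and [measurable]: "g \<in> borel_measurable borel" "H \<in> borel_measurable borel"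
    and H_bdd: "AE y in lborel. norm (H (exp y)) \<le> B"
    and lim: "weak_limit_translates (\<lambda>y. g (exp y)) (omega_filter (\<eta>, u)) (\<lambda>y. H (exp y))"
  shows "wlim_rep g (tau_s (- real N) (\<eta>, u)) (\<lambda>t. H (exp (- real N) * t))"
  unfolding wlim_rep_def
proof (intro conjI allI impI)
  have "AE y in lborel. norm (H (exp (- real N + y))) \<le> B"
    by (rule AE_lborel_translate[OF _ H_bdd]) measurable
  then have "AE t in haar1. norm (H (exp (- real N) * t)) \<le> B"
    by (subst AE_haar1_iff_exp) (auto elim!: eventually_mono simp: exp_add[symmetric])
  then show "Linf1 (\<lambda>t. H (exp (- real N) * t))"
    unfolding Linf1_def by auto
  fix \<phi> :: "real \<Rightarrow> complex" assume "integrable haar1 \<phi>"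
  then have [measurable]: "\<phi> \<in> borel_measurable borel"
    by (auto dest: borel_measurable_integrable simp: haar1_def)
  define k where "k z = indicator {- real N..} z * \<phi> (exp (real N + z))" for z
  have "integrable lborel (\<lambda>y. indicator {0..} y * \<phi> (exp y))"
    using \<open>integrable haar1 \<phi>\<close> by (simp add: integrable_haar1_iff_exp)
  moreover have "k = (\<lambda>z. indicator {0..} (real N + z) * \<phi> (exp (real N + z)))"
    by (auto simp: k_def indicator_def)
  ultimately have "integrable lborel k"
    using integrable_lborel_translate_iff[of "\<lambda>y. indicator {0..} y * \<phi> (exp y)" "real N"] by simp
  then have "((\<lambda>s. LINT z|lborel. indicator {-s..} z * g (exp (s + z)) * k z) \<longlongrightarrow> (LINT z|lborel. H (exp z) * k z))
      (omega_filter (\<eta>, u))"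
    using lim by (simp add: weak_limit_translates_def)
  moreover have "eventually (\<lambda>s. (LINT z|lborel. indicator {-s..} z * g (exp (s + z)) * k z) =
      (LINT t|haar1. g (exp (s - real N) * t) * \<phi> t)) (omega_filter (\<eta>, u))"
    using omega_filter_eventually_ge[OF free u(1), of "real N"]
  proof eventually_elim
    case (elim s)
    then show ?case
      by (simp add: integral_haar1_exp, subst integral_lborel_translate[where c="real N"])
        (auto simp: k_def indicator_def exp_add[symmetric] intro!: Bochner_Integration.integral_cong)
  qed
  moreover have "(LINT z|lborel. H (exp z) * k z) = (LINT t|haar1. H (exp (- real N) * t) * \<phi> t)"
    by (simp add: integral_haar1_exp, subst integral_lborel_translate[where c="real N"])
      (auto simp: k_def indicator_def exp_add[symmetric] intro!: Bochner_Integration.integral_cong)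
  ultimately have "((\<lambda>s. LINT t|haar1. g (exp (s - real N) * t) * \<phi> t) \<longlongrightarrow>
      (LINT t|haar1. H (exp (- real N) * t) * \<phi> t)) (omega_filter (\<eta>, u))"
    by (simp add: tendsto_cong)
  then show "((\<lambda>s. LINT t|haar1. g (exp s * t) * \<phi> t) \<longlongrightarrow> (LINT t|haar1. H (exp (- real N) * t) * \<phi> t))
      (omega_filter (tau_s (- real N) (\<eta>, u)))"
    by (simp add: tendsto_omega_filter_tau_s[OF free u])
qed

lemma ext_rep_of_weak_limit_translates:
  assumes "free_uf \<eta>" and u: "0 \<le> u" "u < 1"
    and "g \<in> borel_measurable borel" and [measurable]: "H \<in> borel_measurable borel"
    and "AE y in lborel. norm (H (exp y)) \<le> B"
    and "weak_limit_translates (\<lambda>y. g (exp y)) (omega_filter (\<eta>, u)) (\<lambda>y. H (exp y))"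
  shows "ext_rep g (\<eta>, u) H"
  unfolding ext_rep_def
proof (intro conjI allI impI exI)
  note W = wlim_rep_tau_s_of_weak_limit_translates[OF assms]
  show "wlim_rep g (\<eta>, u) H"
    using W[of 0] by (simp add: tau_s_zero[OF u])
  show "wlim_rep g (tau_s (- real N) (\<eta>, u)) (\<lambda>t. H (exp (- real N) * t))" for N
    by (rule W)
  show "AE x in haar. exp (- real N) \<le> x \<and> x \<le> 1 \<longrightarrow> H x = H (exp (- real N) * (exp (real N) * x))" for N
    by (simp add: mult.assoc[symmetric] exp_add[symmetric])
qed simp_all

section \<open>The operator U_\<psi> and multiplicative convolution\<close>

lemma measurable_parametric_integral_lborel:
  fixes h :: "real \<Rightarrow> real \<Rightarrow> complex"
  assumes "(\<lambda>(x, r). h x r) \<in> borel_measurable (borel \<Otimes>\<^sub>M borel)"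
  shows "(\<lambda>x. LINT r|lborel. h x r) \<in> borel_measurable borel"
proof -
  have "measurable (borel \<Otimes>\<^sub>M lborel) borel = measurable (borel \<Otimes>\<^sub>M borel) (borel :: complex measure)"
    by (intro measurable_cong_sets sets_pair_measure_cong) simp_all
  then show ?thesis
    using lborel.borel_measurable_lebesgue_integral[of h borel] assms by simp
qed

lemma mconv_exp:
  fixes g h :: "real \<Rightarrow> complex"
  assumes [measurable]: "g \<in> borel_measurable borel" "h \<in> borel_measurable borel"
  shows "mconv g h (exp y) = (LINT r|lborel. g (exp (y - r)) * h (exp r))"
  unfolding mconv_def by (subst integral_haar_exp) (simp_all add: exp_diff)

lemma mconv_measurable:
  fixes g h :: "real \<Rightarrow> complex"
  assumes [measurable]: "g \<in> borel_measurable borel" "h \<in> borel_measurable borel"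
  shows "mconv g h \<in> borel_measurable borel"
proof -
  have "mconv g h = (\<lambda>x. LINT r|lborel. g (x / exp r) * h (exp r))"
    unfolding mconv_def by (intro ext, subst integral_haar_exp) simp_all
  also have "\<dots> \<in> borel_measurable borel"
    by (rule measurable_parametric_integral_lborel) measurable
  finally show ?thesis .
qed

lemma norm_mconv_exp_le:
  fixes g h :: "real \<Rightarrow> complex"
  assumes [measurable]: "g \<in> borel_measurable borel"
    and g_bdd: "AE y in lborel. norm (g (exp y)) \<le> C"
    and [measurable]: "h \<in> borel_measurable borel" and h: "integrable lborel (\<lambda>r. h (exp r))"
  shows "norm (mconv g h (exp y)) \<le> C * (LINT r|lborel. norm (h (exp r)))"
proof -
  have "AE r in lborel. norm (g (exp (y - r))) \<le> C"
    by (rule AE_lborel_reflect[OF _ g_bdd]) measurable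
  then show ?thesis
    unfolding mconv_exp[OF assms(1,3)]
    by (intro norm_integral_bounded_mult_le[OF _ _ h]) simp_all
qed

lemma psi_tilde_measurable:
  fixes \<psi> :: "real \<Rightarrow> complex"
  assumes [measurable]: "\<psi> \<in> borel_measurable borel"
  shows "psi_tilde \<psi> \<in> borel_measurable borel"
  unfolding psi_tilde_def by measurable

lemma psi_tilde_exp: "psi_tilde \<psi> (exp r) = indicator {0..} r * \<psi> (exp r)"
  by (simp add: psi_tilde_def indicator_def)

lemma integrable_psi_tilde_exp:
  fixes \<psi> :: "real \<Rightarrow> complex"
  assumes "integrable haar1 \<psi>"
  shows "integrable lborel (\<lambda>r. psi_tilde \<psi> (exp r))"
proof -
  have "\<psi> \<in> borel_measurable borel"
    using borel_measurable_integrable[OF assms] by (simp add: haar1_def)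
  then show ?thesis
    using assms by (simp add: psi_tilde_exp integrable_haar1_iff_exp)
qed

lemma U_op_exp:
  fixes \<psi> f :: "real \<Rightarrow> complex"
  assumes [measurable]: "\<psi> \<in> borel_measurable borel" "f \<in> borel_measurable borel"
  shows "U_op \<psi> f (exp y) = (LINT r|lborel. indicator {0..} r * f (exp r) * psi_tilde \<psi> (exp (y - r)))"
  unfolding U_op_def
  by (subst integral_haar1_exp)
    (auto simp: psi_tilde_def indicator_def exp_diff intro!: Bochner_Integration.integral_cong)

lemma U_op_measurable:
  fixes \<psi> f :: "real \<Rightarrow> complex"
  assumes [measurable]: "\<psi> \<in> borel_measurable borel" "f \<in> borel_measurable borel"
  shows "U_op \<psi> f \<in> borel_measurable borel"
proof -
  have "U_op \<psi> f = (\<lambda>x. LINT r|lborel. indicator {0..} r * (indicator {0..} (x - exp r) * f (exp r) * \<psi> (x / exp r)))"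
    unfolding U_op_def
    by (intro ext, subst integral_haar1_exp)
      (auto simp: indicator_def intro!: Bochner_Integration.integral_cong)
  also have "\<dots> \<in> borel_measurable borel"
    by (rule measurable_parametric_integral_lborel) measurable
  finally show ?thesis .
qed

lemma weak_limit_translates_U_op:
  fixes \<psi> f F :: "real \<Rightarrow> complex"
  assumes \<psi>: "integrable haar1 \<psi>"
    and [measurable]: "f \<in> borel_measurable borel" "F \<in> borel_measurable borel"
    and f_bdd: "AE t in haar1. norm (f t) \<le> C" and F_bdd: "AE y in lborel. norm (F (exp y)) \<le> C"
    and "0 \<le> C"
    and lim: "weak_limit_translates (\<lambda>y. f (exp y)) \<Phi> (\<lambda>y. F (exp y))"
  shows "weak_limit_translates (\<lambda>y. U_op \<psi> f (exp y)) \<Phi> (\<lambda>y. mconv F (psi_tilde \<psi>) (exp y))"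
proof -
  have [measurable]: "\<psi> \<in> borel_measurable borel"
    using borel_measurable_integrable[OF \<psi>] by (simp add: haar1_def)
  have "AE y in lborel. 0 \<le> y \<longrightarrow> norm (f (exp y)) \<le> C"
    using f_bdd by (subst (asm) AE_haar1_iff_exp) simp_all
  from weak_limit_translates_convolution[OF _ _ this F_bdd \<open>0 \<le> C\<close> integrable_psi_tilde_exp[OF \<psi>] _ lim]
  show ?thesis
    by (simp add: U_op_exp mconv_exp psi_tilde_measurable psi_tilde_exp)
qed

theorem theorem3p5:
  fixes \<psi> f F :: "real \<Rightarrow> complex" and \<eta> :: "nat filter" and u :: real
  assumes "integrable haar1 \<psi>"
    and "Linf1 f"
    and "free_uf \<eta>" and "0 \<le> u" and "u < 1"
    and "ext_rep f (\<eta>, u) F"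
  shows "ext_rep (U_op \<psi> f) (\<eta>, u) (mconv F (psi_tilde \<psi>))"
proof -
  note \<psi> = assms(1) and free = assms(3) and u = assms(4,5) and E = assms(6)
  have [measurable]: "\<psi> \<in> borel_measurable borel"
    using borel_measurable_integrable[OF \<psi>] by (simp add: haar1_def)
  obtain C0 where [measurable]: "f \<in> borel_measurable borel" and "AE t in haar1. norm (f t) \<le> C0"
    using assms(2) by (auto simp: Linf1_def)
  then have f_bdd: "AE t in haar1. norm (f t) \<le> max C0 0"
    by (auto elim!: eventually_mono)
  have [measurable]: "F \<in> borel_measurable borel"
    using E by (simp add: ext_rep_def)
  have F_bdd: "AE y in lborel. norm (F (exp y)) \<le> max C0 0"
    by (rule ext_rep_norm_le[OF free u _ f_bdd _ E]) simp_all
  have "weak_limit_translates (\<lambda>y. f (exp y)) (omega_filter (\<eta>, u)) (\<lambda>y. F (exp y))"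
    by (rule weak_limit_translates_of_ext_rep[OF free u _ f_bdd _ E]) simp_all
  then have "weak_limit_translates (\<lambda>y. U_op \<psi> f (exp y)) (omega_filter (\<eta>, u))
      (\<lambda>y. mconv F (psi_tilde \<psi>) (exp y))"
    by (intro weak_limit_translates_U_op[OF \<psi> _ _ f_bdd F_bdd]) simp_all
  moreover have "AE y in lborel. norm (mconv F (psi_tilde \<psi>) (exp y)) \<le>
      max C0 0 * (LINT r|lborel. norm (psi_tilde \<psi> (exp r)))"
    by (intro AE_I2 norm_mconv_exp_le[OF _ F_bdd] psi_tilde_measurable integrable_psi_tilde_exp[OF \<psi>]) simp_all
  ultimately show ?thesis
    by (intro ext_rep_of_weak_limit_translates[OF free u] U_op_measurable mconv_measurable
        psi_tilde_measurable) simp_all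
qed

end
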